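(* For $n\ge 9$, $t(K(n,3)) =\frac{n}{3}-1$. Moreover, if $S$ is a vertex cut of $K(n,3)$ such that $\frac{|S|}{c(K(n,3)\setminus S)} = \frac{n}{3}-1$, then $S$ is the complement of a maximum independent set of $K(n,3)$.
   Context: The Kneser graph $K(n,k)$ has as vertices the $k$-element subsets of $[n]=\{1,\dots,n\}$, two vertices being adjacent iff they are disjoint. A vertex cut is a set $S$ of vertices whose removal disconnects the graph; $c(G\setminus S)$ is the number of connected components after deleting $S$; the toughness is $t(G)=\min_S |S|/c(G\setminus S)$ over vertex cuts $S$. *)

theory Defs
  imports Complex_Main
begin

text \<open>A (simple) graph is given by a finite vertex set V and a symmetric
adjacency relation E, considered only on V.\<close>

definition kneser_vertices :: "nat \<Rightarrow> nat \<Rightarrow> nat set set" where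
  "kneser_vertices n k = {A. A \<subseteq> {1..n} \<and> card A = k}"

definition kneser_adj :: "nat set \<Rightarrow> nat set \<Rightarrow> bool" where
  "kneser_adj A B \<longleftrightarrow> A \<inter> B = {}"

definition del_adj :: "'a set \<Rightarrow> ('a \<Rightarrow> 'a \<Rightarrow> bool) \<Rightarrow> 'a set \<Rightarrow> 'a \<Rightarrow> 'a \<Rightarrow> bool" where
  "del_adj V E S x y \<longleftrightarrow> x \<in> V - S \<and> y \<in> V - S \<and> E x y"

definition components_del :: "'a set \<Rightarrow> ('a \<Rightarrow> 'a \<Rightarrow> bool) \<Rightarrow> 'a set \<Rightarrow> 'a set set" where
  "components_del V E S = (\<lambda>x. {y \<in> V - S. (del_adj V E S)\<^sup>*\<^sup>* x y}) ` (V - S)"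

definition num_components :: "'a set \<Rightarrow> ('a \<Rightarrow> 'a \<Rightarrow> bool) \<Rightarrow> 'a set \<Rightarrow> nat" where
  "num_components V E S = card (components_del V E S)"

definition vertex_cut :: "'a set \<Rightarrow> ('a \<Rightarrow> 'a \<Rightarrow> bool) \<Rightarrow> 'a set \<Rightarrow> bool" where
  "vertex_cut V E S \<longleftrightarrow> S \<subseteq> V \<and> num_components V E S \<ge> 2"

definition toughness :: "'a set \<Rightarrow> ('a \<Rightarrow> 'a \<Rightarrow> bool) \<Rightarrow> real" where
  "toughness V E = Inf {real (card S) / real (num_components V E S) | S. vertex_cut V E S}"

definition independent_set :: "'a set \<Rightarrow> ('a \<Rightarrow> 'a \<Rightarrow> bool) \<Rightarrow> 'a set \<Rightarrow> bool" where
  "independent_set V E I \<longleftrightarrow> I \<subseteq> V \<and> (\<forall>x\<in>I. \<forall>y\<in>I. \<not> E x y)"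

definition maximum_independent_set :: "'a set \<Rightarrow> ('a \<Rightarrow> 'a \<Rightarrow> bool) \<Rightarrow> 'a set \<Rightarrow> bool" where
  "maximum_independent_set V E I \<longleftrightarrow> independent_set V E I \<and>
     (\<forall>J. independent_set V E J \<longrightarrow> card J \<le> card I)"

end

theory Submission
  imports Defs "HOL-Combinatorics.Multiset_Permutations"
begin

text \<open>Let \<open>S\<close> be a vertex cut of \<open>K(n,3)\<close> leaving \<open>c\<close> components. For a component \<open>K\<close>, the
  vertices outside \<open>K\<close> and its neighbourhood \<open>N(K) \<subseteq> S\<close> form, together with \<open>K\<close>, a pair of
  cross-intersecting families; a fractional matching between \<open>N(x) - N(y)\<close> and \<open>N(y) - N(x)\<close> shows
  that such families leave at least \<open>C(n-3,3)\<close> vertices uncovered, so \<open>|N(K)| \<ge> C(n-3,3)\<close>.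
  Conversely, picking in every component adjacent to \<open>T \<in> S\<close> a vertex disjoint from \<open>T\<close> yields an
  intersecting family of 3-subsets of \<open>[n] - T\<close>, so by Erdos-Ko-Rado \<open>T\<close> is adjacent to at most
  \<open>C(n-4,2)\<close> components. Double counting gives \<open>c C(n-3,3) \<le> |S| C(n-4,2)\<close>, i.e.
  \<open>|S| / c \<ge> n/3 - 1\<close>, with equality for the complement of a star. In the case of equality every
  bound is tight, which forces all components to be single vertices; then \<open>V - S\<close> is an
  independent set of size \<open>C(n-1,2)\<close>, hence maximum.\<close>

section \<open>The Erdos-Ko-Rado theorem via Katona's cycle method\<close>

lemma int_dvd_small_eq_0:
  fixes x :: int
  assumes "m dvd x" "\<bar>x\<bar> < m"
  shows "x = 0"
  using assms dvd_imp_le_int[of x m] by fastforce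

lemma dvd_diff_if_mod_add_eq:
  fixes i j a b m :: nat
  assumes "(i + a) mod m = (j + b) mod m"
  shows "int m dvd (int i - int j) - (int b - int a)"
proof -
  have "int (i + a) mod int m = int (j + b) mod int m"
    using assms by (metis of_nat_mod)
  then show ?thesis by (simp add: mod_eq_dvd_iff algebra_simps)
qed

text \<open>Two positions \<open>j, j'\<close> on a cycle of length \<open>m \<ge> 2k\<close>, displaced by \<open>d, d'\<close> from a common
  base point with \<open>d \<equiv> d' (mod k)\<close>: either \<open>d = d'\<close> and then \<open>j = j'\<close>, or \<open>|d - d'| = k\<close> and then
  the arcs of length \<open>k\<close> starting at \<open>j\<close> and \<open>j'\<close> cannot overlap.\<close>

lemma eq_if_overlapping_offsets:
  fixes j j' m k :: nat and d d' :: int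
  assumes m: "2 * k \<le> m" and j: "j < m" "j' < m"
    and offsets: "int m dvd (int j - int j') - (d - d')" "\<bar>d\<bar> < k" "\<bar>d'\<bar> < k"
    and cong: "d mod k = d' mod k"
    and overlap: "a < k" "b < k" "int m dvd (int j - int j') - (int a - int b)"
  shows "j = j'"
proof -
  obtain q where q: "d - d' = int k * q"
    using cong by (auto simp: mod_eq_dvd_iff elim: dvdE)
  have "\<bar>int k * q\<bar> < int k * 2" using offsets q by linarith
  then have "\<bar>q\<bar> < 2" by (simp add: abs_mult mult_less_cancel_left)
  have "q = 0"
  proof (rule ccontr)
    assume "q \<noteq> 0"
    with \<open>\<bar>q\<bar> < 2\<close> have "\<bar>d - d'\<bar> = k" by (auto simp: q abs_mult)
    have "int m dvd (d - d') - (int a - int b)"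
      using dvd_diff[OF overlap(3) offsets(1)] by (simp add: algebra_simps)
    moreover have "\<bar>(d - d') - (int a - int b)\<bar> < int m"
      using \<open>\<bar>d - d'\<bar> = k\<close> overlap m by linarith
    ultimately have "d - d' = int a - int b"
      using int_dvd_small_eq_0 by fastforce
    then show False using \<open>\<bar>d - d'\<bar> = k\<close> overlap by linarith
  qed
  then have "int m dvd int j - int j'" using offsets q by simp
  moreover have "\<bar>int j - int j'\<bar> < int m" using j by linarith
  ultimately show "j = j'" using int_dvd_small_eq_0 by fastforce
qed

lemma card_overlapping_arcs_le:
  fixes I :: "nat set"
  assumes m: "2 * k \<le> m" and I: "I \<subseteq> {..<m}"
    and overlap: "\<And>i j. i \<in> I \<Longrightarrow> j \<in> I \<Longrightarrow> \<exists>a<k. \<exists>b<k. (i + a) mod m = (j + b) mod m"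
  shows "card I \<le> k"
proof (cases "I = {}")
  case False
  then obtain i0 where i0: "i0 \<in> I" by auto
  have overlap_dvd: "\<exists>a<k. \<exists>b<k. int m dvd (int i - int j) - (int a - int b)"
    if "i \<in> I" "j \<in> I" for i j
    using overlap[OF that] dvd_diff_if_mod_add_eq by blast
  define offset where "offset j = (int j - int i0 + k) mod int m - k" for j
  have offset: "\<bar>offset j\<bar> < k \<and> int m dvd (int j - int i0) - offset j" if j: "j \<in> I" for j
  proof -
    obtain a b where ab: "a < k" "b < k" "int m dvd (int j - int i0) - (int a - int b)"
      using overlap_dvd[OF j i0] by blast
    have "(int j - int i0 + k) mod int m = (int a - int b + k) mod int m"
      using ab(3) by (simp add: mod_eq_dvd_iff algebra_simps)
    also have "\<dots> = int a - int b + k"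
      using ab m by (intro mod_pos_pos_trivial) auto
    finally have "offset j = int a - int b" by (simp add: offset_def)
    then show ?thesis using ab by auto
  qed
  have "inj_on (\<lambda>j. offset j mod int k) I"
  proof (rule inj_onI)
    fix j j' assume j: "j \<in> I" "j' \<in> I" and cong: "offset j mod int k = offset j' mod int k"
    have "int m dvd (int j - int j') - (offset j - offset j')"
      using dvd_diff[OF conjunct2[OF offset[OF j(1)]] conjunct2[OF offset[OF j(2)]]]
      by (simp add: algebra_simps)
    moreover obtain a b where "a < k" "b < k" "int m dvd (int j - int j') - (int a - int b)"
      using overlap_dvd[OF j] by blast
    ultimately show "j = j'"
      using eq_if_overlapping_offsets[OF m _ _ _ _ _ cong] offset j I by blast
  qed
  then have "card I = card ((\<lambda>j. offset j mod int k) ` I)" by (simp add: card_image)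
  also have "\<dots> \<le> card {0..<int k}"
    using overlap[OF i0 i0] by (intro card_mono) auto
  finally show ?thesis by simp
qed simp

definition cyclic_arc :: "'a list \<Rightarrow> nat \<Rightarrow> nat \<Rightarrow> 'a set" where
  "cyclic_arc xs k i = (\<lambda>a. xs ! ((i + a) mod length xs)) ` {..<k}"

lemma cyclic_arc_subset: "xs \<noteq> [] \<Longrightarrow> cyclic_arc xs k i \<subseteq> set xs"
  unfolding cyclic_arc_def by auto

lemma cyclic_arc_map: "xs \<noteq> [] \<Longrightarrow> cyclic_arc (map f xs) k i = f ` cyclic_arc xs k i"
  unfolding cyclic_arc_def by (auto simp: image_image)

lemma card_cyclic_arc:
  assumes "distinct xs" "k \<le> length xs"
  shows "card (cyclic_arc xs k i) = k"
proof -
  have "inj_on (\<lambda>a. xs ! ((i + a) mod length xs)) {..<k}"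
  proof (rule inj_onI)
    fix a b assume ab: "a \<in> {..<k}" "b \<in> {..<k}"
      and "xs ! ((i + a) mod length xs) = xs ! ((i + b) mod length xs)"
    moreover have "0 < length xs" using ab assms by auto
    ultimately have "(i + a) mod length xs = (i + b) mod length xs"
      using assms by (simp add: nth_eq_iff_index_eq)
    then have "int (i + a) mod int (length xs) = int (i + b) mod int (length xs)"
      by (metis of_nat_mod)
    then have "int (length xs) dvd int a - int b" by (simp add: mod_eq_dvd_iff)
    moreover have "\<bar>int a - int b\<bar> < int (length xs)" using ab assms by auto
    ultimately show "a = b" using int_dvd_small_eq_0 by fastforce
  qed
  then show ?thesis unfolding cyclic_arc_def by (simp add: card_image)
qed

lemma cyclic_arcs_meet:
  assumes "distinct xs" "xs \<noteq> []" "cyclic_arc xs k i \<inter> cyclic_arc xs k j \<noteq> {}"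
  shows "\<exists>a<k. \<exists>b<k. (i + a) mod length xs = (j + b) mod length xs"
proof -
  obtain a b where "a < k" "b < k"
    "xs ! ((i + a) mod length xs) = xs ! ((j + b) mod length xs)"
    using assms(3) unfolding cyclic_arc_def by auto
  with assms(1,2) show ?thesis by (auto simp: nth_eq_iff_index_eq)
qed

lemma card_intersecting_cyclic_arcs_le:
  assumes "distinct xs" "2 * k \<le> length xs"
    and intersecting: "\<And>A B. A \<in> F \<Longrightarrow> B \<in> F \<Longrightarrow> A \<inter> B \<noteq> {}"
  shows "card {i. i < length xs \<and> cyclic_arc xs k i \<in> F} \<le> k"
proof (cases "xs = []")
  case False
  show ?thesis
  proof (rule card_overlapping_arcs_le)
    fix i j assume "i \<in> {i. i < length xs \<and> cyclic_arc xs k i \<in> F}"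
      "j \<in> {i. i < length xs \<and> cyclic_arc xs k i \<in> F}"
    then show "\<exists>a<k. \<exists>b<k. (i + a) mod length xs = (j + b) mod length xs"
      using False assms by (intro cyclic_arcs_meet) auto
  qed (use assms in auto)
qed simp

lemma obtain_bij_betw_image_eq:
  assumes "finite X" "A \<subseteq> X" "B \<subseteq> X" "card A = card B"
  obtains \<sigma> where "bij_betw \<sigma> X X" "\<sigma> ` A = B"
proof -
  have fin: "finite A" "finite B" using assms finite_subset by auto
  obtain g where g: "bij_betw g A B" using finite_same_card_bij[OF fin assms(4)] by blast
  have "card (X - A) = card (X - B)"
    using assms fin by (simp add: card_Diff_subset)
  then obtain h where h: "bij_betw h (X - A) (X - B)"
    using finite_same_card_bij assms(1) by blast
  have "bij_betw (\<lambda>x. if x \<in> A then g x else h x) (A \<union> (X - A)) (B \<union> (X - B))"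
    by (rule bij_betw_disjoint_Un[OF g h]) auto
  moreover have "A \<union> (X - A) = X" "B \<union> (X - B) = X" using assms by auto
  moreover have "(\<lambda>x. if x \<in> A then g x else h x) ` A = B"
    using g by (auto simp: bij_betw_def)
  ultimately show ?thesis using that by metis
qed

definition arc_positions :: "'a set \<Rightarrow> nat \<Rightarrow> 'a set \<Rightarrow> ('a list \<times> nat) set" where
  "arc_positions X k A =
     {(xs, i) \<in> permutations_of_set X \<times> {..<card X}. cyclic_arc xs k i = A}"

lemma card_arc_positions_le:
  assumes "finite X" "A \<subseteq> X" "B \<subseteq> X" "card A = card B"
  shows "card (arc_positions X k A) \<le> card (arc_positions X k B)"
proof -
  obtain \<sigma> where \<sigma>: "bij_betw \<sigma> X X" "\<sigma> ` A = B"
    using obtain_bij_betw_image_eq[OF assms] .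
  then have inj: "inj_on \<sigma> X" by (simp add: bij_betw_def)
  let ?h = "\<lambda>(xs, i). (map \<sigma> xs, i)"
  have "inj_on ?h (arc_positions X k A)"
    using inj by (auto simp: inj_on_def arc_positions_def permutations_of_set_def
        dest: inj_on_map_eq_map[THEN iffD1, rotated])
  moreover have "?h ` arc_positions X k A \<subseteq> arc_positions X k B"
  proof clarify
    fix xs i assume "(xs, i) \<in> arc_positions X k A"
    then have xs: "set xs = X" "distinct xs" "i < card X" "cyclic_arc xs k i = A"
      by (auto simp: arc_positions_def permutations_of_set_def)
    then have "xs \<noteq> []" by auto
    then show "(map \<sigma> xs, i) \<in> arc_positions X k B"
      using xs \<sigma> inj by (auto simp: arc_positions_def permutations_of_set_def
          distinct_map cyclic_arc_map bij_betw_def)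
  qed
  moreover have "finite (arc_positions X k B)"
    by (auto simp: arc_positions_def intro: finite_subset[of _ "permutations_of_set X \<times> {..<card X}"])
  ultimately show ?thesis by (rule card_inj_on_le)
qed

lemma card_arc_positions_eq:
  assumes "finite X" "A \<subseteq> X" "B \<subseteq> X" "card A = card B"
  shows "card (arc_positions X k A) = card (arc_positions X k B)"
  using card_arc_positions_le[OF assms, of k]
    card_arc_positions_le[OF assms(1,3,2) assms(4)[symmetric], of k]
  by simp

lemma sum_card_arc_positions:
  assumes "finite G"
  shows "(\<Sum>A\<in>G. card (arc_positions X k A))
    = (\<Sum>xs\<in>permutations_of_set X. card {i. i < card X \<and> cyclic_arc xs k i \<in> G})"
proof -
  have fin: "finite (arc_positions X k A)" for A
    by (auto simp: arc_positions_def intro: finite_subset[of _ "permutations_of_set X \<times> {..<card X}"])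
  have "(\<Sum>A\<in>G. card (arc_positions X k A)) = card (\<Union>A\<in>G. arc_positions X k A)"
    using assms fin by (intro card_UN_disjoint[symmetric]) (auto simp: arc_positions_def)
  also have "(\<Union>A\<in>G. arc_positions X k A)
      = Sigma (permutations_of_set X) (\<lambda>xs. {i. i < card X \<and> cyclic_arc xs k i \<in> G})"
    by (auto simp: arc_positions_def)
  also have "card \<dots> = (\<Sum>xs\<in>permutations_of_set X. card {i. i < card X \<and> cyclic_arc xs k i \<in> G})"
    by (intro card_SigmaI) auto
  finally show ?thesis .
qed

lemma cyclic_arc_of_permutation:
  assumes "xs \<in> permutations_of_set X" "0 < k" "k \<le> card X"
  shows "cyclic_arc xs k i \<subseteq> X" "card (cyclic_arc xs k i) = k"
proof -
  have xs: "set xs = X" "distinct xs" "length xs = card X"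
    using assms(1) by (auto simp: permutations_of_set_def distinct_card)
  then have "xs \<noteq> []" "k \<le> length xs" using assms by auto
  then show "cyclic_arc xs k i \<subseteq> X" "card (cyclic_arc xs k i) = k"
    using xs(1) cyclic_arc_subset card_cyclic_arc[OF xs(2)] by auto
qed

text \<open>Katona's proof: every cyclic ordering of \<open>X\<close> carries at most \<open>k\<close> members of \<open>F\<close> as arcs,
  and by symmetry every \<open>k\<close>-set is an arc equally often.\<close>

theorem erdos_ko_rado:
  fixes X :: "'a set"
  assumes X: "finite X" and k: "0 < k" "2 * k \<le> card X"
    and F: "F \<subseteq> {A. A \<subseteq> X \<and> card A = k}"
    and intersecting: "\<And>A B. A \<in> F \<Longrightarrow> B \<in> F \<Longrightarrow> A \<inter> B \<noteq> {}"
  shows "card F \<le> (card X - 1) choose (k - 1)"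
proof -
  define m where "m = card X"
  define Tk where "Tk = {A. A \<subseteq> X \<and> card A = k}"
  have finTk: "finite Tk" unfolding Tk_def using X by (auto intro: finite_subset[of _ "Pow X"])
  obtain A0 where A0: "A0 \<in> Tk"
    using obtain_subset_with_card_n[of k X] k by (auto simp: Tk_def)
  define c where "c = card (arc_positions X k A0)"
  have fibre: "card (arc_positions X k A) = c" if "A \<in> Tk" for A
    using card_arc_positions_eq[OF X, of A A0 k] that A0 by (simp add: Tk_def c_def)
  have "(m choose k) * c = (\<Sum>A\<in>Tk. card (arc_positions X k A))"
    using fibre X by (simp add: Tk_def m_def n_subsets)
  also have "\<dots> = (\<Sum>xs\<in>permutations_of_set X. m)"
    using sum_card_arc_positions[OF finTk] cyclic_arc_of_permutation[of _ X k] k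
    by (simp add: Tk_def m_def)
  finally have total: "(m choose k) * c = fact m * m" using X by (simp add: m_def)
  have "card F * c = (\<Sum>A\<in>F. card (arc_positions X k A))"
    using fibre F by (simp add: Tk_def subset_iff)
  also have "\<dots> = (\<Sum>xs\<in>permutations_of_set X. card {i. i < m \<and> cyclic_arc xs k i \<in> F})"
    using sum_card_arc_positions[of F] F finTk by (simp add: Tk_def m_def finite_subset)
  also have "\<dots> \<le> (\<Sum>xs\<in>permutations_of_set X. k)"
  proof (rule sum_mono)
    fix xs assume "xs \<in> permutations_of_set X"
    then have "distinct xs" "length xs = m"
      by (auto simp: m_def permutations_of_set_def length_finite_permutations_of_set)
    then show "card {i. i < m \<and> cyclic_arc xs k i \<in> F} \<le> k"
      using card_intersecting_cyclic_arcs_le[of xs k F] k intersecting by (simp add: m_def)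
  qed
  finally have per_ordering: "card F * c \<le> fact m * k" using X by (simp add: m_def)
  have "fact m * (card F * m) = (card F * c) * (m choose k)"
    using total by (simp add: ac_simps)
  also have "\<dots> \<le> (fact m * k) * (m choose k)"
    using per_ordering by (rule mult_right_mono) simp
  also have "\<dots> = fact m * (k * (m choose k))" by (simp add: ac_simps)
  finally have "card F * m \<le> k * (m choose k)" by (metis fact_gt_zero nat_mult_le_cancel1)
  also have "k * (m choose k) = m * ((m - 1) choose (k - 1))"
    using k Suc_times_binomial_eq[of "m - 1" "k - 1"] by (simp add: m_def)
  finally show ?thesis using k by (simp add: m_def)
qed

text \<open>Each \<open>u \<in> F\<close> sends weight \<open>1 / deg v\<close> to each neighbour \<open>v\<close>; as degrees agree along
  edges, every \<open>u \<in> F\<close> sends out exactly 1 and every neighbour receives at most 1.\<close>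

lemma card_le_card_neighbourhood:
  fixes U :: "'a set" and Rel :: "'a \<Rightarrow> 'a \<Rightarrow> bool"
  assumes finU: "finite U" and FU: "F \<subseteq> U"
    and sym: "\<And>u v. Rel u v \<Longrightarrow> Rel v u"
    and degree_eq: "\<And>u v. u \<in> U \<Longrightarrow> v \<in> U \<Longrightarrow> Rel u v \<Longrightarrow>
      card {w\<in>U. Rel u w} = card {w\<in>U. Rel v w}"
    and pos: "\<And>u. u \<in> F \<Longrightarrow> card {w\<in>U. Rel u w} > 0"
  shows "card F \<le> card {v\<in>U. \<exists>u\<in>F. Rel u v}"
proof -
  define deg where "deg u = real (card {w\<in>U. Rel u w})" for u
  define N where "N = {v\<in>U. \<exists>u\<in>F. Rel u v}"
  have finF: "finite F" using finU FU finite_subset by blast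
  have finN: "finite N" using finU by (simp add: N_def)
  have "real (card F) = (\<Sum>u\<in>F. 1)" by simp
  also have "\<dots> = (\<Sum>u\<in>F. \<Sum>v\<in>{v\<in>N. Rel u v}. 1 / deg v)"
  proof (rule sum.cong[OF refl])
    fix u assume u: "u \<in> F"
    have N_u: "{v\<in>N. Rel u v} = {w\<in>U. Rel u w}" using u by (auto simp: N_def)
    have "(\<Sum>v\<in>{v\<in>N. Rel u v}. 1 / deg v) = (\<Sum>v\<in>{w\<in>U. Rel u w}. 1 / deg u)"
      unfolding N_u using u FU by (intro sum.cong[OF refl]) (auto simp: deg_def degree_eq)
    also have "\<dots> = 1" using pos[OF u] by (simp add: deg_def)
    finally show "1 = (\<Sum>v\<in>{v\<in>N. Rel u v}. 1 / deg v)" by simp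
  qed
  also have "\<dots> = (\<Sum>v\<in>N. \<Sum>u\<in>{u\<in>F. Rel u v}. 1 / deg v)"
    by (rule sum.swap_restrict[OF finF finN])
  also have "\<dots> \<le> (\<Sum>v\<in>N. \<Sum>u\<in>{w\<in>U. Rel v w}. 1 / deg v)"
    using FU sym finU by (intro sum_mono sum_mono2) (auto simp: deg_def)
  also have "\<dots> = (\<Sum>v\<in>N. 1)"
  proof (rule sum.cong[OF refl])
    fix v assume "v \<in> N"
    then obtain u where "u \<in> F" "Rel u v" "v \<in> U" by (auto simp: N_def)
    then have "card {w\<in>U. Rel v w} > 0" using FU sym finU by (subst card_gt_0_iff) auto
    then show "(\<Sum>u\<in>{w\<in>U. Rel v w}. 1 / deg v) = 1" by (simp add: deg_def)
  qed
  finally show ?thesis by (simp add: N_def)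
qed

lemma card_subsets_with_card_Int:
  assumes fin: "finite P" "finite Q" and disj: "P \<inter> Q = {}" and j: "j \<le> k"
  shows "card {v. v \<subseteq> P \<union> Q \<and> card v = k \<and> card (v \<inter> Q) = j}
       = (card P choose (k - j)) * (card Q choose j)"
proof -
  define SP where "SP = {A. A \<subseteq> P \<and> card A = k - j}"
  define SQ where "SQ = {B. B \<subseteq> Q \<and> card B = j}"
  have "inj_on (\<lambda>(A, B). A \<union> B) (SP \<times> SQ)"
    by (rule inj_on_inverseI[where g = "\<lambda>v. (v \<inter> P, v \<inter> Q)"])
      (use disj in \<open>auto simp: SP_def SQ_def\<close>)
  moreover have "(\<lambda>(A, B). A \<union> B) ` (SP \<times> SQ) = {v. v \<subseteq> P \<union> Q \<and> card v = k \<and> card (v \<inter> Q) = j}"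
  proof (intro equalityI subsetI)
    fix v assume "v \<in> (\<lambda>(A, B). A \<union> B) ` (SP \<times> SQ)"
    then obtain A B where AB: "A \<subseteq> P" "card A = k - j" "B \<subseteq> Q" "card B = j" "v = A \<union> B"
      by (auto simp: SP_def SQ_def)
    have "finite A" "finite B" "A \<inter> B = {}" using AB fin disj finite_subset by auto
    then have "card v = k" using AB j by (simp add: card_Un_disjoint)
    moreover have "v \<inter> Q = B" using AB disj by auto
    ultimately show "v \<in> {v. v \<subseteq> P \<union> Q \<and> card v = k \<and> card (v \<inter> Q) = j}" using AB by auto
  next
    fix v assume v: "v \<in> {v. v \<subseteq> P \<union> Q \<and> card v = k \<and> card (v \<inter> Q) = j}"
    have split: "v = (v \<inter> P) \<union> (v \<inter> Q)" using v by auto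
    have "finite v" using v fin by (auto intro: finite_subset)
    then have "card v = card (v \<inter> P) + card (v \<inter> Q)"
      using disj by (subst split, subst card_Un_disjoint) auto
    then have "(v \<inter> P, v \<inter> Q) \<in> SP \<times> SQ" using v by (auto simp: SP_def SQ_def)
    with split show "v \<in> (\<lambda>(A, B). A \<union> B) ` (SP \<times> SQ)" by (metis (no_types, lifting) case_prod_conv image_eqI)
  qed
  ultimately have "card {v. v \<subseteq> P \<union> Q \<and> card v = k \<and> card (v \<inter> Q) = j} = card SP * card SQ"
    by (metis card_image card_cartesian_product)
  also have "\<dots> = (card P choose (k - j)) * (card Q choose j)"
    using n_subsets[OF fin(1)] n_subsets[OF fin(2)] by (simp add: SP_def SQ_def)
  finally show ?thesis .
qed

section \<open>Components of a graph minus a vertex set\<close>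

definition neighbours_in :: "('a \<Rightarrow> 'a \<Rightarrow> bool) \<Rightarrow> 'a set \<Rightarrow> 'a set \<Rightarrow> 'a set" where
  "neighbours_in E S K = {s \<in> S. \<exists>x\<in>K. E x s}"

locale symmetric_graph =
  fixes E :: "'a \<Rightarrow> 'a \<Rightarrow> bool"
  assumes E_sym: "\<And>a b. E a b \<Longrightarrow> E b a"
begin

definition component_of :: "'a set \<Rightarrow> 'a set \<Rightarrow> 'a \<Rightarrow> 'a set" where
  "component_of V S x = {y \<in> V - S. (del_adj V E S)\<^sup>*\<^sup>* x y}"

lemma components_del_eq: "components_del V E S = component_of V S ` (V - S)"
  by (simp add: components_del_def component_of_def)

lemma del_adj_rtranclp_sym: "(del_adj V E S)\<^sup>*\<^sup>* x y \<Longrightarrow> (del_adj V E S)\<^sup>*\<^sup>* y x"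
proof (induction rule: rtranclp_induct)
  case (step y z)
  then have "del_adj V E S z y" using E_sym by (auto simp: del_adj_def)
  then show ?case using step.IH by (rule converse_rtranclp_into_rtranclp)
qed simp

lemma component_of_eq:
  assumes "y \<in> component_of V S x"
  shows "component_of V S y = component_of V S x"
proof -
  have "(del_adj V E S)\<^sup>*\<^sup>* x y" using assms by (simp add: component_of_def)
  then have "(del_adj V E S)\<^sup>*\<^sup>* x z \<longleftrightarrow> (del_adj V E S)\<^sup>*\<^sup>* y z" for z
    by (meson del_adj_rtranclp_sym rtranclp_trans)
  then show ?thesis by (simp add: component_of_def)
qed

lemma component_of_in_components: "x \<in> V - S \<Longrightarrow> component_of V S x \<in> components_del V E S"
  by (simp add: components_del_eq)

lemma mem_component_of: "x \<in> V - S \<Longrightarrow> x \<in> component_of V S x"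
  by (simp add: component_of_def)

lemma components_subset: "K \<in> components_del V E S \<Longrightarrow> K \<subseteq> V - S"
  by (auto simp: components_del_eq component_of_def)

lemma components_nonempty: "K \<in> components_del V E S \<Longrightarrow> K \<noteq> {}"
  unfolding components_del_eq using mem_component_of by blast

lemma components_eq_if_meet:
  assumes "K1 \<in> components_del V E S" "K2 \<in> components_del V E S" "K1 \<inter> K2 \<noteq> {}"
  shows "K1 = K2"
proof -
  obtain x1 x2 where "K1 = component_of V S x1" "K2 = component_of V S x2"
    using assms(1,2) by (auto simp: components_del_eq)
  with assms(3) show ?thesis using component_of_eq by blast
qed

lemma component_closed:
  assumes "K \<in> components_del V E S" "a \<in> K" "b \<in> V - S" "E a b"
  shows "b \<in> K"
proof -
  obtain x where x: "K = component_of V S x" using assms(1) by (auto simp: components_del_eq)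
  have "del_adj V E S a b" using assms components_subset[OF assms(1)] by (auto simp: del_adj_def)
  with assms(2,3) show ?thesis
    unfolding x component_of_def by (auto intro: rtranclp.rtrancl_into_rtrancl)
qed

lemma adjacent_in_same_component:
  assumes "a \<in> V - S" "b \<in> V - S" "E a b"
  shows "\<exists>K\<in>components_del V E S. a \<in> K \<and> b \<in> K"
proof
  show "component_of V S a \<in> components_del V E S" using assms(1) by (rule component_of_in_components)
  then show "a \<in> component_of V S a \<and> b \<in> component_of V S a"
    using assms mem_component_of component_closed by blast
qed

lemma component_has_neighbour:
  assumes "K \<in> components_del V E S" "a \<in> K" "b \<in> K" "a \<noteq> b"
  shows "\<exists>c\<in>K. E a c"
proof -
  have K: "K = component_of V S a"
    using assms(1,2) component_of_eq by (auto simp: components_del_eq)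
  then have "(del_adj V E S)\<^sup>*\<^sup>* a b" using assms(3) by (auto simp: component_of_def)
  then obtain c where ac: "del_adj V E S a c"
    using assms(4) by (auto elim: converse_rtranclpE)
  then have "c \<in> K" unfolding K component_of_def by (auto simp: del_adj_def)
  with ac show ?thesis by (auto simp: del_adj_def)
qed

lemma components_del_independent:
  assumes "\<And>a b. a \<in> V - S \<Longrightarrow> b \<in> V - S \<Longrightarrow> \<not> E a b"
  shows "components_del V E S = (\<lambda>x. {x}) ` (V - S)"
proof -
  have "(del_adj V E S)\<^sup>*\<^sup>* x y \<Longrightarrow> y = x" for x y
    by (induction rule: rtranclp_induct) (use assms in \<open>auto simp: del_adj_def\<close>)
  then show ?thesis by (auto simp: components_del_eq component_of_def)
qed

lemma component_nonadjacent_outside: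
  assumes K: "K \<in> components_del V E S" and "x \<in> K" "r \<in> V - K - neighbours_in E S K"
  shows "\<not> E x r"
proof
  assume "E x r"
  with assms(2,3) have "r \<in> S"
    using component_closed[OF K] by (auto simp: neighbours_in_def)
  with assms(2,3) \<open>E x r\<close> show False by (auto simp: neighbours_in_def)
qed

lemma other_components_outside:
  assumes K: "K \<in> components_del V E S" and K': "K' \<in> components_del V E S" "K' \<noteq> K"
  shows "K' \<subseteq> V - K - neighbours_in E S K"
proof -
  have "K' \<subseteq> V - S" "K' \<inter> K = {}"
    using components_subset[OF K'(1)] components_eq_if_meet[OF K'(1) K] K'(2) by auto
  then show ?thesis by (auto simp: neighbours_in_def)
qed

lemma components_nonadjacent:
  assumes K: "K \<in> components_del V E S" and K': "K' \<in> components_del V E S" "K' \<noteq> K"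
    and "a \<in> K" "b \<in> K'"
  shows "\<not> E a b"
  using assms component_closed[OF K] components_subset[OF K'(1)]
    components_eq_if_meet[OF K'(1) K] by blast

lemma two_le_card_outside_component:
  assumes V: "finite V" and K: "K \<in> components_del V E S"
    and three: "2 < card (components_del V E S)"
  shows "2 \<le> card (V - K - neighbours_in E S K)"
proof -
  have "finite (components_del V E S)" using V by (simp add: components_del_def)
  then have "\<not> card (components_del V E S - {K}) \<le> Suc 0"
    using three K by (simp add: card_Diff_singleton)
  then obtain K1 K2 where K12: "K1 \<in> components_del V E S" "K2 \<in> components_del V E S"
    "K1 \<noteq> K" "K2 \<noteq> K" "K1 \<noteq> K2"
    using card_le_Suc0_iff_eq[of "components_del V E S - {K}"] \<open>finite (components_del V E S)\<close>
    by blast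
  obtain x1 x2 where x: "x1 \<in> K1" "x2 \<in> K2"
    using components_nonempty[OF K12(1)] components_nonempty[OF K12(2)] by blast
  then have "x1 \<noteq> x2" using components_eq_if_meet[OF K12(1,2)] K12(5) by blast
  moreover have "{x1, x2} \<subseteq> V - K - neighbours_in E S K"
    using x other_components_outside[OF K K12(1,3)] other_components_outside[OF K K12(2,4)]
    by blast
  ultimately show ?thesis
    using card_mono[of "V - K - neighbours_in E S K" "{x1, x2}"] V by simp
qed

lemma card_component_partition:
  assumes V: "finite V" "S \<subseteq> V" and K: "K \<in> components_del V E S"
  shows "card V = card K + card (neighbours_in E S K) + card (V - K - neighbours_in E S K)"
proof -
  let ?N = "neighbours_in E S K"
  have sub: "K \<subseteq> V - S" "?N \<subseteq> S"
    using components_subset[OF K] by (auto simp: neighbours_in_def)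
  then have fin: "finite K" "finite ?N" using V by (auto intro: finite_subset)
  have "V = (K \<union> ?N) \<union> (V - K - ?N)" using V sub by auto
  moreover have "card (K \<union> ?N) = card K + card ?N"
    using fin sub by (intro card_Un_disjoint) auto
  moreover have "card ((K \<union> ?N) \<union> (V - K - ?N)) = card (K \<union> ?N) + card (V - K - ?N)"
    using fin V by (intro card_Un_disjoint) auto
  ultimately show ?thesis by simp
qed

end

section \<open>Kneser graphs\<close>

lemma mem_kneser_vertices: "A \<in> kneser_vertices n k \<longleftrightarrow> A \<subseteq> {1..n} \<and> card A = k"
  by (simp add: kneser_vertices_def)

lemma finite_kneser_vertex: "A \<in> kneser_vertices n k \<Longrightarrow> finite A"
  by (auto simp: mem_kneser_vertices intro: finite_subset)

lemma finite_kneser_vertices: "finite (kneser_vertices n k)"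
  unfolding kneser_vertices_def by (rule finite_subset[of _ "Pow {1..n}"]) auto

lemma card_kneser_vertices: "card (kneser_vertices n k) = n choose k"
  unfolding kneser_vertices_def using n_subsets[of "{1..n}" k] by simp

interpretation kneser: symmetric_graph kneser_adj
  by unfold_locales (auto simp: kneser_adj_def)

definition kneser_nbhd :: "nat \<Rightarrow> nat \<Rightarrow> nat set \<Rightarrow> nat set set" where
  "kneser_nbhd n k x = {v \<in> kneser_vertices n k. v \<inter> x = {}}"

lemma card_kneser_nbhd:
  assumes "x \<in> kneser_vertices n k"
  shows "card (kneser_nbhd n k x) = (n - k) choose k"
proof -
  have "kneser_nbhd n k x = {v. v \<subseteq> {1..n} - x \<and> card v = k}"
    by (auto simp: kneser_nbhd_def mem_kneser_vertices)
  moreover have "card ({1..n} - x) = n - k"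
    using assms finite_kneser_vertex[OF assms] by (simp add: mem_kneser_vertices card_Diff_subset)
  ultimately show ?thesis using n_subsets[of "{1..n} - x" k] by simp
qed

lemma card_kneser_star:
  assumes "a \<in> {1..n}" "0 < k"
  shows "card {A \<in> kneser_vertices n k. a \<in> A} = (n - 1) choose (k - 1)"
proof -
  define B where "B = {A. A \<subseteq> {1..n} - {a} \<and> card A = k - 1}"
  have "{A \<in> kneser_vertices n k. a \<in> A} = insert a ` B"
  proof (intro equalityI subsetI)
    fix A assume "A \<in> {A \<in> kneser_vertices n k. a \<in> A}"
    then have "A - {a} \<in> B" "A = insert a (A - {a})"
      using finite_kneser_vertex[of A] by (auto simp: mem_kneser_vertices B_def)
    then show "A \<in> insert a ` B" by blast
  next
    fix A assume "A \<in> insert a ` B"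
    then obtain A' where "A' \<subseteq> {1..n} - {a}" "card A' = k - 1" "A = insert a A'"
      by (auto simp: B_def)
    moreover have "finite A'" "a \<notin> A'"
      using \<open>A' \<subseteq> {1..n} - {a}\<close> by (auto intro: finite_subset)
    ultimately show "A \<in> {A \<in> kneser_vertices n k. a \<in> A}"
      using assms by (auto simp: mem_kneser_vertices)
  qed
  moreover have "inj_on (insert a) B"
    by (rule inj_on_inverseI[where g = "\<lambda>A. A - {a}"]) (auto simp: B_def)
  moreover have "card B = (n - 1) choose (k - 1)"
    using assms n_subsets[of "{1..n} - {a}" "k - 1"] by (simp add: B_def)
  ultimately show ?thesis by (simp add: card_image)
qed

lemma kneser_independent_card_le:
  assumes "0 < k" "2 * k \<le> n" "independent_set (kneser_vertices n k) kneser_adj I"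
  shows "card I \<le> (n - 1) choose (k - 1)"
  using erdos_ko_rado[of "{1..n}" k I] assms
  by (auto simp: independent_set_def kneser_adj_def mem_kneser_vertices subset_iff)

section \<open>Cross-intersecting families in \<open>K(n,3)\<close>\<close>

lemma kneser_nbhd_diff_filter_eq:
  fixes x y u :: "nat set"
  assumes "x \<subseteq> {1..n}" "u \<inter> x = {}" "j < k"
  defines "Z \<equiv> {1..n} - x - y"
  shows "{w \<in> kneser_nbhd n k y - kneser_nbhd n k x. w \<inter> u = {} \<and> card (w \<inter> Z) = j}
     = {w. w \<subseteq> (x - y) \<union> (Z - u) \<and> card w = k \<and> card (w \<inter> (Z - u)) = j}"
proof (intro equalityI subsetI)
  fix w assume "w \<in> {w \<in> kneser_nbhd n k y - kneser_nbhd n k x. w \<inter> u = {} \<and> card (w \<inter> Z) = j}"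
  then have w: "w \<subseteq> {1..n}" "card w = k" "w \<inter> y = {}" "w \<inter> u = {}" "card (w \<inter> Z) = j"
    by (auto simp: kneser_nbhd_def mem_kneser_vertices)
  moreover have "w \<inter> (Z - u) = w \<inter> Z" using w by blast
  ultimately show "w \<in> {w. w \<subseteq> (x - y) \<union> (Z - u) \<and> card w = k \<and> card (w \<inter> (Z - u)) = j}"
    by (auto simp: Z_def)
next
  fix w assume "w \<in> {w. w \<subseteq> (x - y) \<union> (Z - u) \<and> card w = k \<and> card (w \<inter> (Z - u)) = j}"
  then have w: "w \<subseteq> (x - y) \<union> (Z - u)" "card w = k" "card (w \<inter> (Z - u)) = j" by auto
  have "w \<inter> x \<noteq> {}"
  proof
    assume "w \<inter> x = {}"
    then have "w \<inter> (Z - u) = w" using w(1) by blast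
    then show False using w assms(3) by simp
  qed
  moreover have "w \<inter> (Z - u) = w \<inter> Z" "w \<inter> u = {}" "w \<inter> y = {}" "w \<subseteq> {1..n}"
    using w(1) assms(1,2) by (auto simp: Z_def)
  ultimately show "w \<in> {w \<in> kneser_nbhd n k y - kneser_nbhd n k x. w \<inter> u = {} \<and> card (w \<inter> Z) = j}"
    using w by (auto simp: kneser_nbhd_def mem_kneser_vertices)
qed

lemma card_disjoint_same_outside:
  assumes n: "9 \<le> n" and x: "x \<in> kneser_vertices n 3" and y: "y \<in> kneser_vertices n 3"
    and xy: "x \<inter> y \<noteq> {}" and u: "u \<in> kneser_nbhd n 3 x - kneser_nbhd n 3 y"
  defines "Z \<equiv> {1..n} - x - y"
  defines "j \<equiv> card (u \<inter> Z)"
  shows "card {w \<in> kneser_nbhd n 3 y - kneser_nbhd n 3 x. w \<inter> u = {} \<and> card (w \<inter> Z) = j}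
       = (card (x - y) choose (3 - j)) * ((card Z - j) choose j)"
    and "0 < (card (x - y) choose (3 - j)) * ((card Z - j) choose j)"
proof -
  have u': "u \<subseteq> {1..n}" "card u = 3" "u \<inter> x = {}" "u \<inter> y \<noteq> {}"
    using u by (auto simp: kneser_nbhd_def mem_kneser_vertices)
  have fin: "finite x" "finite y" "finite u" "finite Z"
    using x y u' finite_kneser_vertex by (auto simp: Z_def intro: finite_subset)
  have card3: "card x = 3" "card y = 3" using x y by (auto simp: mem_kneser_vertices)
  have "u \<inter> Z \<subset> u" using u' by (auto simp: Z_def)
  then have "j < 3" using fin u' unfolding j_def by (metis psubset_card_mono)
  have card_x_y: "card (x - y) = card (y - x)"
    using fin card3 by (simp add: card_Diff_subset_Int Int_commute)
  have "u \<subseteq> (y - x) \<union> (u \<inter> Z)" using u' by (auto simp: Z_def)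
  then have "card u \<le> card (y - x) + j"
    using fin unfolding j_def by (meson card_Un_le card_mono finite_Int finite_Diff finite_UnI order_trans)
  then have type_fits: "3 - j \<le> card (x - y)" using u' card_x_y by linarith
  have "card (x \<union> y) \<le> 5"
  proof -
    have "card (x \<inter> y) \<ge> 1" using xy fin by (simp add: Suc_le_eq card_gt_0_iff)
    then show ?thesis using card_Un_Int[OF fin(1,2)] card3 by linarith
  qed
  moreover have "Z = {1..n} - (x \<union> y)" "x \<union> y \<subseteq> {1..n}"
    using x y by (auto simp: Z_def mem_kneser_vertices)
  ultimately have card_Z: "n - 5 \<le> card Z" using fin by (simp add: card_Diff_subset)
  have card_Z_u: "card (Z - u) = card Z - j"
    using fin by (simp add: j_def card_Diff_subset_Int Int_commute)
  have "{w \<in> kneser_nbhd n 3 y - kneser_nbhd n 3 x. w \<inter> u = {} \<and> card (w \<inter> Z) = j}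
     = {w. w \<subseteq> (x - y) \<union> (Z - u) \<and> card w = 3 \<and> card (w \<inter> (Z - u)) = j}"
    using x u' \<open>j < 3\<close> unfolding Z_def by (intro kneser_nbhd_diff_filter_eq) (auto simp: mem_kneser_vertices)
  also have "card \<dots> = (card (x - y) choose (3 - j)) * (card (Z - u) choose j)"
    using fin \<open>j < 3\<close> by (intro card_subsets_with_card_Int) (auto simp: Z_def)
  finally show "card {w \<in> kneser_nbhd n 3 y - kneser_nbhd n 3 x. w \<inter> u = {} \<and> card (w \<inter> Z) = j}
       = (card (x - y) choose (3 - j)) * ((card Z - j) choose j)"
    by (simp add: card_Z_u)
  show "0 < (card (x - y) choose (3 - j)) * ((card Z - j) choose j)"
    using type_fits \<open>j < 3\<close> card_Z n by (simp add: zero_less_binomial_iff)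
qed

definition kneser_partners :: "nat \<Rightarrow> nat set \<Rightarrow> nat set \<Rightarrow> nat set \<Rightarrow> nat set \<Rightarrow> bool" where
  "kneser_partners n x y u v \<longleftrightarrow> u \<inter> v = {}
     \<and> card (u \<inter> ({1..n} - x - y)) = card (v \<inter> ({1..n} - x - y))
     \<and> (u \<in> kneser_nbhd n 3 x - kneser_nbhd n 3 y \<and> v \<in> kneser_nbhd n 3 y - kneser_nbhd n 3 x
        \<or> u \<in> kneser_nbhd n 3 y - kneser_nbhd n 3 x \<and> v \<in> kneser_nbhd n 3 x - kneser_nbhd n 3 y)"

lemma kneser_partners_swap: "kneser_partners n y x = kneser_partners n x y"
proof -
  have "{1..n} - y - x = {1..n} - x - y" by blast
  then show ?thesis unfolding kneser_partners_def by (simp only: disj_commute)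
qed

lemma kneser_partners_iff:
  assumes "u \<in> kneser_nbhd n 3 x - kneser_nbhd n 3 y"
  shows "kneser_partners n x y u w \<longleftrightarrow> w \<in> kneser_nbhd n 3 y - kneser_nbhd n 3 x \<and> w \<inter> u = {}
    \<and> card (w \<inter> ({1..n} - x - y)) = card (u \<inter> ({1..n} - x - y))"
  using assms by (auto simp: kneser_partners_def)

lemma card_kneser_partners:
  assumes n: "9 \<le> n" and x: "x \<in> kneser_vertices n 3" and y: "y \<in> kneser_vertices n 3"
    and xy: "x \<inter> y \<noteq> {}"
    and u: "u \<in> (kneser_nbhd n 3 x - kneser_nbhd n 3 y) \<union> (kneser_nbhd n 3 y - kneser_nbhd n 3 x)"
  defines "Z \<equiv> {1..n} - x - y"
  defines "j \<equiv> card (u \<inter> Z)"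
  shows "card {w. kneser_partners n x y u w} = (card (x - y) choose (3 - j)) * ((card Z - j) choose j)"
  using u
proof
  assume u: "u \<in> kneser_nbhd n 3 x - kneser_nbhd n 3 y"
  have "{w. kneser_partners n x y u w}
      = {w \<in> kneser_nbhd n 3 y - kneser_nbhd n 3 x. w \<inter> u = {} \<and> card (w \<inter> Z) = j}"
    using kneser_partners_iff[OF u] by (simp add: Z_def j_def)
  then show ?thesis
    using card_disjoint_same_outside(1)[OF n x y xy u] by (simp add: Z_def j_def)
next
  assume u: "u \<in> kneser_nbhd n 3 y - kneser_nbhd n 3 x"
  have "card (x - y) = card (y - x)"
    using x y finite_kneser_vertex[OF x] finite_kneser_vertex[OF y]
    by (simp add: mem_kneser_vertices card_Diff_subset_Int Int_commute)
  moreover have "{1..n} - y - x = Z" by (auto simp: Z_def)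
  moreover have "y \<inter> x \<noteq> {}" using xy by blast
  moreover have "{w. kneser_partners n x y u w}
      = {w \<in> kneser_nbhd n 3 x - kneser_nbhd n 3 y. w \<inter> u = {} \<and> card (w \<inter> Z) = j}"
    using kneser_partners_iff[OF u] \<open>{1..n} - y - x = Z\<close>
    by (simp add: kneser_partners_swap j_def)
  ultimately show ?thesis
    using card_disjoint_same_outside(1)[OF n y x _ u] by (simp add: j_def)
qed

text \<open>Partnership is regular on each class of sets with a fixed number of points outside \<open>x \<union> y\<close>,
  so \<open>C \<inter> (N(x) - N(y))\<close> has at least as many partners, none of which can lie in \<open>R\<close>.\<close>

lemma cross_intersecting_nbhd_bound:
  assumes n: "9 \<le> n" and x: "x \<in> kneser_vertices n 3" and y: "y \<in> kneser_vertices n 3"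
    and xy: "x \<inter> y \<noteq> {}" and cross: "\<And>c r. c \<in> C \<Longrightarrow> r \<in> R \<Longrightarrow> c \<inter> r \<noteq> {}"
  defines "Lx \<equiv> kneser_nbhd n 3 x - kneser_nbhd n 3 y"
    and "Ry \<equiv> kneser_nbhd n 3 y - kneser_nbhd n 3 x"
  shows "card (C \<inter> Lx) + card (R \<inter> Ry) \<le> card Ry"
proof -
  define U where "U = Lx \<union> Ry"
  define Z where "Z = {1..n} - x - y"
  define F where "F = C \<inter> Lx"
  define NF where "NF = {v\<in>U. \<exists>u\<in>F. kneser_partners n x y u v}"
  have finU: "finite U"
    unfolding U_def Lx_def Ry_def kneser_nbhd_def using finite_kneser_vertices by auto
  have deg: "card {w\<in>U. kneser_partners n x y u w}
      = (card (x - y) choose (3 - card (u \<inter> Z))) * ((card Z - card (u \<inter> Z)) choose card (u \<inter> Z))"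
    if "u \<in> U" for u
  proof -
    have "{w\<in>U. kneser_partners n x y u w} = {w. kneser_partners n x y u w}"
      by (auto simp: U_def Lx_def Ry_def kneser_partners_def)
    then show ?thesis
      using card_kneser_partners[OF n x y xy, of u] that by (simp add: U_def Lx_def Ry_def Z_def)
  qed
  have "card F \<le> card NF" unfolding NF_def
  proof (rule card_le_card_neighbourhood[OF finU])
    show "F \<subseteq> U" by (auto simp: F_def U_def)
    show "\<And>u v. kneser_partners n x y u v \<Longrightarrow> kneser_partners n x y v u"
      by (auto simp: kneser_partners_def)
    show "card {w\<in>U. kneser_partners n x y u w} = card {w\<in>U. kneser_partners n x y v w}"
      if "u \<in> U" "v \<in> U" "kneser_partners n x y u v" for u v
      using deg[OF that(1)] deg[OF that(2)] that(3) by (simp add: kneser_partners_def Z_def)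
    show "0 < card {w\<in>U. kneser_partners n x y u w}" if "u \<in> F" for u
      using card_disjoint_same_outside(2)[OF n x y xy, of u] deg[of u] that
      by (simp add: F_def U_def Lx_def Z_def)
  qed
  moreover have "NF \<subseteq> Ry - R"
    using cross by (auto simp: NF_def F_def kneser_partners_def Lx_def Ry_def)
  moreover have "finite Ry" using finU by (simp add: U_def)
  ultimately have "card F + card (R \<inter> Ry) \<le> card (Ry - R) + card (R \<inter> Ry)"
    by (meson add_right_mono card_mono finite_Diff le_trans)
  also have "\<dots> = card Ry"
    using \<open>finite Ry\<close> by (metis Int_commute card_Diff_subset_Int add.commute card_Int_Diff finite_Int)
  finally show ?thesis by (simp add: F_def)
qed

text \<open>\<open>C\<close> avoids \<open>N(y)\<close> and \<open>R\<close> avoids \<open>N(x)\<close>; split the vertices into \<open>N(x)\<close>, \<open>N(y) - N(x)\<close> and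
  the sets meeting both \<open>x\<close> and \<open>y\<close>.\<close>

lemma cross_intersecting_card_bound:
  assumes n: "9 \<le> n" and CV: "C \<subseteq> kneser_vertices n 3" and RV: "R \<subseteq> kneser_vertices n 3"
    and x: "x \<in> C" and y: "y \<in> R" and disj: "C \<inter> R = {}"
    and cross: "\<And>c r. c \<in> C \<Longrightarrow> r \<in> R \<Longrightarrow> c \<inter> r \<noteq> {}"
  shows "card C + card R + ((n - 3) choose 3)
    + card {z \<in> kneser_vertices n 3 - (C \<union> R). z \<inter> x \<noteq> {} \<and> z \<inter> y \<noteq> {}} \<le> n choose 3"
proof -
  define V where "V = kneser_vertices n 3"
  define M where "M = {z \<in> V. z \<inter> x \<noteq> {} \<and> z \<inter> y \<noteq> {}}"
  define Lx where "Lx = kneser_nbhd n 3 x - kneser_nbhd n 3 y"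
  define Ry where "Ry = kneser_nbhd n 3 y - kneser_nbhd n 3 x"
  have xV: "x \<in> V" and yV: "y \<in> V" using x y CV RV by (auto simp: V_def)
  have fin: "finite M" "finite Lx" "finite Ry" "finite (kneser_nbhd n 3 x)"
    using finite_kneser_vertices[of n 3]
    by (auto simp: M_def Lx_def Ry_def V_def kneser_nbhd_def)
  have "V = kneser_nbhd n 3 x \<union> Ry \<union> M"
    by (auto simp: V_def M_def Ry_def kneser_nbhd_def)
  moreover have "card (kneser_nbhd n 3 x \<union> Ry) = card (kneser_nbhd n 3 x) + card Ry"
    by (rule card_Un_disjoint) (use fin in \<open>auto simp: Ry_def\<close>)
  moreover have "card (kneser_nbhd n 3 x \<union> Ry \<union> M) = card (kneser_nbhd n 3 x \<union> Ry) + card M"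
    by (rule card_Un_disjoint) (use fin in \<open>auto simp: M_def Ry_def kneser_nbhd_def\<close>)
  ultimately have card_V: "card V = card (kneser_nbhd n 3 x) + card Ry + card M" by simp
  have "C = (C \<inter> M) \<union> (C \<inter> Lx)"
    using CV cross[OF _ y] by (auto simp: M_def Lx_def V_def kneser_nbhd_def)
  moreover have "card ((C \<inter> M) \<union> (C \<inter> Lx)) = card (C \<inter> M) + card (C \<inter> Lx)"
    using fin by (intro card_Un_disjoint) (auto simp: M_def Lx_def kneser_nbhd_def)
  ultimately have card_C: "card C = card (C \<inter> M) + card (C \<inter> Lx)" by simp
  have "R = (R \<inter> M) \<union> (R \<inter> Ry)"
    using RV cross[OF x] by (auto simp: M_def Ry_def V_def kneser_nbhd_def)
  moreover have "card ((R \<inter> M) \<union> (R \<inter> Ry)) = card (R \<inter> M) + card (R \<inter> Ry)"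
    using fin by (intro card_Un_disjoint) (auto simp: M_def Ry_def kneser_nbhd_def)
  ultimately have card_R: "card R = card (R \<inter> M) + card (R \<inter> Ry)" by simp
  have "M = (C \<inter> M) \<union> (R \<inter> M) \<union> (M - (C \<union> R))" by blast
  moreover have "card ((C \<inter> M) \<union> (R \<inter> M) \<union> (M - (C \<union> R)))
      = card (C \<inter> M) + card (R \<inter> M) + card (M - (C \<union> R))"
    using fin disj by (subst card_Un_disjoint, auto intro!: card_Un_disjoint)
  ultimately have card_M: "card M = card (C \<inter> M) + card (R \<inter> M) + card (M - (C \<union> R))" by simp
  have "card (C \<inter> Lx) + card (R \<inter> Ry) \<le> card Ry"
    unfolding Lx_def Ry_def
    using cross_intersecting_nbhd_bound[OF n _ _ _ cross] xV yV cross[OF x y] by (simp add: V_def)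
  moreover have "M - (C \<union> R) = {z \<in> V - (C \<union> R). z \<inter> x \<noteq> {} \<and> z \<inter> y \<noteq> {}}"
    by (auto simp: M_def)
  ultimately show ?thesis
    using card_V card_C card_R card_M card_kneser_nbhd[of x n 3] xV card_kneser_vertices[of n 3]
    by (simp add: V_def)
qed

lemma obtain_kneser_vertex_avoiding:
  assumes n: "9 \<le> n" and e: "e \<in> {1..n}" "e \<notin> X \<union> Y"
    and XY: "X \<in> kneser_vertices n 3" "Y \<in> kneser_vertices n 3"
  obtains z where "z \<in> kneser_vertices n 3" "e \<in> z" "z \<inter> X = {}" "z \<inter> Y = {}"
proof -
  have fresh: "\<exists>a\<in>{1..n}. a \<notin> G" if G: "finite G" "card G < n" for G :: "nat set"
  proof -
    have "n - card G \<le> card ({1..n} - G)" using diff_card_le_card_Diff[OF G(1), of "{1..n}"] by simp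
    then have "0 < card ({1..n} - G)" using G(2) by linarith
    then show ?thesis by (fastforce simp: card_gt_0_iff)
  qed
  have fin: "finite (X \<union> Y)" using XY finite_kneser_vertex by blast
  have "card (X \<union> Y) \<le> 6"
    using XY card_Un_le[of X Y] by (simp add: mem_kneser_vertices)
  then have "card (insert e (X \<union> Y)) < n" using n fin by (simp add: card_insert_if)
  then obtain f where f: "f \<in> {1..n}" "f \<notin> insert e (X \<union> Y)"
    using fresh[of "insert e (X \<union> Y)"] fin by blast
  have "card (insert f (insert e (X \<union> Y))) < n"
    using \<open>card (X \<union> Y) \<le> 6\<close> fin n by (simp add: card_insert_if)
  then obtain g where g: "g \<in> {1..n}" "g \<notin> insert f (insert e (X \<union> Y))"
    using fresh[of "insert f (insert e (X \<union> Y))"] fin by blast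
  have "card {e, f, g} = 3" using f g by simp
  then have "{e, f, g} \<in> kneser_vertices n 3" using e f g by (simp add: mem_kneser_vertices)
  moreover have "{e, f, g} \<inter> X = {}" "{e, f, g} \<inter> Y = {}" using e f g by auto
  ultimately show ?thesis using that by blast
qed

lemma card_kneser_vertices_Diff_Un:
  assumes "C \<subseteq> kneser_vertices n k" "R \<subseteq> kneser_vertices n k" "C \<inter> R = {}"
  shows "card (kneser_vertices n k - (C \<union> R)) + card C + card R = n choose k"
proof -
  have "finite C" "finite R"
    using assms finite_kneser_vertices[of n k] by (auto intro: finite_subset)
  then have "card (C \<union> R) = card C + card R" using assms(3) by (rule card_Un_disjoint)
  moreover have "card (C \<union> R) \<le> card (kneser_vertices n k)"
    using assms finite_kneser_vertices[of n k] by (intro card_mono) auto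
  ultimately show ?thesis
    using assms \<open>finite C\<close> \<open>finite R\<close> by (simp add: card_Diff_subset card_kneser_vertices)
qed

lemma cross_intersecting_card_bound_strict_disjoint_pair:
  assumes n: "9 \<le> n" and CV: "C \<subseteq> kneser_vertices n 3" and RV: "R \<subseteq> kneser_vertices n 3"
    and disj: "C \<inter> R = {}" and cross: "\<And>c r. c \<in> C \<Longrightarrow> r \<in> R \<Longrightarrow> c \<inter> r \<noteq> {}"
    and AB: "A \<in> C" "B \<in> C" "A \<inter> B = {}" and PQ: "P \<in> R" "Q \<in> R" "P \<inter> Q = {}"
  shows "card C + card R + ((n - 3) choose 3) < n choose 3"
proof -
  obtain e where e: "e \<in> A" "e \<in> P" using cross[OF AB(1) PQ(1)] by blast
  moreover have "A \<in> kneser_vertices n 3" using AB CV by blast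
  ultimately have "e \<in> {1..n}" "e \<notin> B \<union> Q"
    using AB PQ by (auto simp: mem_kneser_vertices)
  moreover have "B \<in> kneser_vertices n 3" "Q \<in> kneser_vertices n 3" using AB PQ CV RV by auto
  ultimately obtain z where z: "z \<in> kneser_vertices n 3" "e \<in> z" "z \<inter> B = {}" "z \<inter> Q = {}"
    by (rule obtain_kneser_vertex_avoiding[OF n])
  then have "z \<notin> C \<union> R" using cross[OF AB(2)] cross[OF _ PQ(2)] by blast
  then have "z \<in> {z \<in> kneser_vertices n 3 - (C \<union> R). z \<inter> A \<noteq> {} \<and> z \<inter> P \<noteq> {}}"
    using z e by auto
  then have "0 < card {z \<in> kneser_vertices n 3 - (C \<union> R). z \<inter> A \<noteq> {} \<and> z \<inter> P \<noteq> {}}"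
    using finite_kneser_vertices[of n 3] by (auto simp: card_gt_0_iff)
  then show ?thesis
    using cross_intersecting_card_bound[OF n CV RV AB(1) PQ(1) disj cross] by linarith
qed

lemma cross_intersecting_card_bound_strict_intersecting:
  assumes n: "9 \<le> n" and CV: "C \<subseteq> kneser_vertices n 3" and RV: "R \<subseteq> kneser_vertices n 3"
    and disj: "C \<inter> R = {}" and cross: "\<And>c r. c \<in> C \<Longrightarrow> r \<in> R \<Longrightarrow> c \<inter> r \<noteq> {}"
    and AB: "A \<in> C" "B \<in> C" "A \<inter> B = {}"
    and R_intersecting: "\<And>P Q. P \<in> R \<Longrightarrow> Q \<in> R \<Longrightarrow> P \<inter> Q \<noteq> {}" and R2: "2 \<le> card R"
  shows "card C + card R + ((n - 3) choose 3) < n choose 3"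
proof -
  have "finite R" using RV finite_kneser_vertices by (rule finite_subset)
  then obtain y r where yr: "y \<in> R" "r \<in> R" "y \<noteq> r"
    using R2 card_le_Suc0_iff_eq[of R] by (metis not_less_eq_eq numeral_2_eq_2)
  have yrV: "y \<in> kneser_vertices n 3" "r \<in> kneser_vertices n 3" using yr RV by auto
  have "\<not> y \<subseteq> r"
  proof
    assume "y \<subseteq> r"
    moreover have "card y = card r" using yrV by (simp add: mem_kneser_vertices)
    ultimately have "y = r" using card_subset_eq[OF finite_kneser_vertex[OF yrV(2)]] by blast
    with yr(3) show False ..
  qed
  then obtain p where p: "p \<in> y" "p \<notin> r" by blast
  obtain A' where A': "A' \<in> C" "p \<notin> A'" using AB by blast
  have "p \<in> {1..n}" "p \<notin> A' \<union> r" using p A' yrV by (auto simp: mem_kneser_vertices)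
  moreover have "A' \<in> kneser_vertices n 3" "r \<in> kneser_vertices n 3" using A' yrV CV by auto
  ultimately obtain z where z: "z \<in> kneser_vertices n 3" "p \<in> z" "z \<inter> A' = {}" "z \<inter> r = {}"
    by (rule obtain_kneser_vertex_avoiding[OF n])
  text \<open>All of \<open>N(y)\<close> and also \<open>z\<close>, which meets \<open>y\<close>, lie outside \<open>C \<union> R\<close>.\<close>
  then have "z \<notin> C \<union> R" using cross[OF A'(1)] cross[OF _ yr(2)] by blast
  moreover have "kneser_nbhd n 3 y \<subseteq> kneser_vertices n 3 - (C \<union> R)"
    using cross[OF _ yr(1)] R_intersecting[OF _ yr(1)] by (auto simp: kneser_nbhd_def)
  moreover have "z \<notin> kneser_nbhd n 3 y" using p z by (auto simp: kneser_nbhd_def)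
  ultimately have "card (insert z (kneser_nbhd n 3 y)) \<le> card (kneser_vertices n 3 - (C \<union> R))"
    using z finite_kneser_vertices[of n 3] by (intro card_mono) auto
  moreover have "card (insert z (kneser_nbhd n 3 y)) = card (kneser_nbhd n 3 y) + 1"
    using finite_kneser_vertices[of n 3] \<open>z \<notin> kneser_nbhd n 3 y\<close> by (simp add: kneser_nbhd_def)
  ultimately show ?thesis
    using card_kneser_nbhd[of y n 3] yr RV card_kneser_vertices_Diff_Un[OF CV RV disj] by auto
qed

lemma cross_intersecting_card_bound_strict:
  assumes n: "9 \<le> n" and CV: "C \<subseteq> kneser_vertices n 3" and RV: "R \<subseteq> kneser_vertices n 3"
    and "C \<noteq> {}" and disj: "C \<inter> R = {}" and cross: "\<And>c r. c \<in> C \<Longrightarrow> r \<in> R \<Longrightarrow> c \<inter> r \<noteq> {}"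
    and C_no_isolated: "\<And>c. c \<in> C \<Longrightarrow> \<exists>c'\<in>C. c \<inter> c' = {}" and R2: "2 \<le> card R"
  shows "card C + card R + ((n - 3) choose 3) < n choose 3"
proof -
  obtain A B where AB: "A \<in> C" "B \<in> C" "A \<inter> B = {}"
    using \<open>C \<noteq> {}\<close> C_no_isolated by blast
  show ?thesis
  proof (cases "\<exists>P\<in>R. \<exists>Q\<in>R. P \<inter> Q = {}")
    case True
    then show ?thesis
      using cross_intersecting_card_bound_strict_disjoint_pair[OF n CV RV disj cross AB] by blast
  next
    case False
    then show ?thesis
      using cross_intersecting_card_bound_strict_intersecting[OF n CV RV disj cross AB _ R2] by blast
  qed
qed

section \<open>Vertex cuts of \<open>K(n,3)\<close>\<close>

lemma three_mult_choose_three: "0 < m \<Longrightarrow> 3 * (m choose 3) = m * ((m - 1) choose 2)"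
  using Suc_times_binomial_eq[of "m - 1" 2] by (simp add: numeral_3_eq_3 ac_simps)

lemma three_mult_choose_three_diff:
  assumes "4 \<le> n" shows "3 * ((n - 3) choose 3) = (n - 3) * ((n - 4) choose 2)"
proof -
  have "n - 3 - 1 = n - 4" by simp
  then show ?thesis using three_mult_choose_three[of "n - 3"] assms by simp
qed

lemma card_kneser_component_nbhd_ge:
  assumes n: "9 \<le> n" and cut: "vertex_cut (kneser_vertices n 3) kneser_adj S"
    and K: "K \<in> components_del (kneser_vertices n 3) kneser_adj S"
  shows "(n - 3) choose 3 \<le> card (neighbours_in kneser_adj S K)"
proof -
  let ?V = "kneser_vertices n 3" and ?N = "neighbours_in kneser_adj S K"
  have S: "S \<subseteq> ?V" using cut by (simp add: vertex_cut_def)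
  have "card (components_del ?V kneser_adj S) \<ge> 2"
    using cut by (simp add: vertex_cut_def num_components_def)
  moreover have "finite (components_del ?V kneser_adj S)"
    using finite_kneser_vertices by (simp add: components_del_def)
  ultimately obtain K' where K': "K' \<in> components_del ?V kneser_adj S" "K' \<noteq> K"
    using card_le_Suc0_iff_eq K by (metis not_less_eq_eq numeral_2_eq_2)
  have "K' \<subseteq> ?V - K - ?N" by (rule kneser.other_components_outside[OF K K'])
  then obtain y where y: "y \<in> ?V - K - ?N"
    using kneser.components_nonempty[OF K'(1)] by blast
  obtain x where x: "x \<in> K" using kneser.components_nonempty[OF K] by blast
  have "K \<subseteq> ?V" using kneser.components_subset[OF K] by blast
  then have "card K + card (?V - K - ?N) + ((n - 3) choose 3) \<le> n choose 3"
    using cross_intersecting_card_bound[OF n _ _ x y]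
      kneser.component_nonadjacent_outside[OF K]
    by (fastforce simp: kneser_adj_def)
  then show ?thesis
    using kneser.card_component_partition[OF finite_kneser_vertices S K]
      card_kneser_vertices[of n 3] by linarith
qed

lemma card_kneser_component_nbhd_gt:
  assumes n: "9 \<le> n" and S: "S \<subseteq> kneser_vertices n 3"
    and K: "K \<in> components_del (kneser_vertices n 3) kneser_adj S"
    and nonsingleton: "a \<in> K" "b \<in> K" "a \<noteq> b"
    and rest: "2 \<le> card (kneser_vertices n 3 - K - neighbours_in kneser_adj S K)"
  shows "(n - 3) choose 3 < card (neighbours_in kneser_adj S K)"
proof -
  let ?V = "kneser_vertices n 3" and ?N = "neighbours_in kneser_adj S K"
  have "\<exists>c'\<in>K. c \<inter> c' = {}" if c: "c \<in> K" for c
  proof -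
    obtain d where "d \<in> K" "d \<noteq> c" using nonsingleton by (cases "c = a") auto
    then show ?thesis
      using kneser.component_has_neighbour[OF K c] by (auto simp: kneser_adj_def)
  qed
  moreover have "K \<subseteq> ?V" "K \<noteq> {}"
    using kneser.components_subset[OF K] kneser.components_nonempty[OF K] by auto
  ultimately have "card K + card (?V - K - ?N) + ((n - 3) choose 3) < n choose 3"
    using cross_intersecting_card_bound_strict[OF n, of K "?V - K - ?N"] rest
      kneser.component_nonadjacent_outside[OF K]
    by (fastforce simp: kneser_adj_def)
  then show ?thesis
    using kneser.card_component_partition[OF finite_kneser_vertices S K]
      card_kneser_vertices[of n 3] by linarith
qed

text \<open>Choosing in each such component a vertex disjoint from \<open>T\<close> gives an intersecting family
  of 3-subsets of \<open>{1..n} - T\<close>, to which Erdos-Ko-Rado applies.\<close>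

lemma card_kneser_components_adjacent_le:
  assumes n: "9 \<le> n" and S: "S \<subseteq> kneser_vertices n 3" and T: "T \<in> S"
  shows "card {K \<in> components_del (kneser_vertices n 3) kneser_adj S.
      T \<in> neighbours_in kneser_adj S K} \<le> (n - 4) choose 2"
proof -
  let ?V = "kneser_vertices n 3"
  define A where "A = {K \<in> components_del ?V kneser_adj S. T \<in> neighbours_in kneser_adj S K}"
  have "\<forall>K\<in>A. \<exists>k. k \<in> K \<and> T \<inter> k = {}"
    by (auto simp: A_def neighbours_in_def kneser_adj_def Int_commute)
  then obtain rep where rep: "\<And>K. K \<in> A \<Longrightarrow> rep K \<in> K \<and> T \<inter> rep K = {}"
    by metis
  have A_comp: "K \<in> components_del ?V kneser_adj S" if "K \<in> A" for K
    using that by (simp add: A_def)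
  have rep_V: "rep K \<in> ?V - S" if "K \<in> A" for K
    using rep[OF that] kneser.components_subset[OF A_comp[OF that]] by blast
  have "inj_on rep A"
    using rep kneser.components_eq_if_meet[OF A_comp A_comp] by (metis inj_onI disjoint_iff)
  moreover have "card (rep ` A) \<le> (card ({1..n} - T) - 1) choose (3 - 1)"
  proof (rule erdos_ko_rado)
    have "T \<in> kneser_vertices n 3" using T S by blast
    then have "T \<subseteq> {1..n}" "card T = 3" by (simp_all add: mem_kneser_vertices)
    then show "2 * 3 \<le> card ({1..n} - T)" using n finite_subset[of T "{1..n}"]
      by (simp add: card_Diff_subset)
    show "rep ` A \<subseteq> {B. B \<subseteq> {1..n} - T \<and> card B = 3}"
      using rep rep_V by (auto simp: mem_kneser_vertices)
    show "B \<inter> B' \<noteq> {}" if BB': "B \<in> rep ` A" "B' \<in> rep ` A" for B B'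
    proof (cases "B = B'")
      case True
      obtain K where "K \<in> A" "B = rep K" using BB'(1) by blast
      then have "card B = 3" using rep_V by (simp add: mem_kneser_vertices)
      then show ?thesis using True by auto
    next
      case False
      then obtain K K' where "K \<in> A" "K' \<in> A" "K \<noteq> K'" "B = rep K" "B' = rep K'"
        using BB' by auto
      then show ?thesis
        using kneser.components_nonadjacent[OF A_comp A_comp] rep by (auto simp: kneser_adj_def)
    qed
  qed simp_all
  moreover have "card ({1..n} - T) = n - 3"
    using T S finite_kneser_vertex[of T n 3] by (auto simp: mem_kneser_vertices card_Diff_subset)
  ultimately show ?thesis unfolding A_def by (simp add: card_image)
qed

lemma sum_card_kneser_component_nbhd_le:
  assumes n: "9 \<le> n" and S: "S \<subseteq> kneser_vertices n 3"
  shows "(\<Sum>K\<in>components_del (kneser_vertices n 3) kneser_adj S. card (neighbours_in kneser_adj S K))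
    \<le> card S * ((n - 4) choose 2)"
proof -
  let ?C = "components_del (kneser_vertices n 3) kneser_adj S"
  have fin: "finite S" "finite ?C"
    using S finite_kneser_vertices by (auto simp: components_del_def intro: finite_subset)
  have "(\<Sum>K\<in>?C. card (neighbours_in kneser_adj S K))
      = (\<Sum>K\<in>?C. \<Sum>T\<in>{T\<in>S. T \<in> neighbours_in kneser_adj S K}. 1)"
    by (simp add: neighbours_in_def)
  also have "\<dots> = (\<Sum>T\<in>S. \<Sum>K\<in>{K\<in>?C. T \<in> neighbours_in kneser_adj S K}. 1)"
    by (rule sum.swap_restrict[OF fin(2,1)])
  also have "\<dots> \<le> (\<Sum>T\<in>S. (n - 4) choose 2)"
    using card_kneser_components_adjacent_le[OF n S] by (intro sum_mono) simp
  finally show ?thesis by simp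
qed

lemma kneser_cut_card_ge:
  assumes n: "9 \<le> n" and cut: "vertex_cut (kneser_vertices n 3) kneser_adj S"
  shows "(n - 3) * num_components (kneser_vertices n 3) kneser_adj S \<le> 3 * card S"
proof -
  let ?C = "components_del (kneser_vertices n 3) kneser_adj S"
  define c where "c = num_components (kneser_vertices n 3) kneser_adj S"
  have S: "S \<subseteq> kneser_vertices n 3" using cut by (simp add: vertex_cut_def)
  have "c * ((n - 3) choose 3) = (\<Sum>K\<in>?C. (n - 3) choose 3)"
    by (simp add: c_def num_components_def)
  also have "\<dots> \<le> (\<Sum>K\<in>?C. card (neighbours_in kneser_adj S K))"
    using card_kneser_component_nbhd_ge[OF n cut] by (rule sum_mono)
  also have "\<dots> \<le> card S * ((n - 4) choose 2)"
    using sum_card_kneser_component_nbhd_le[OF n S] .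
  finally have "c * (3 * ((n - 3) choose 3)) \<le> (3 * card S) * ((n - 4) choose 2)" by simp
  moreover have "3 * ((n - 3) choose 3) = (n - 3) * ((n - 4) choose 2)"
    using three_mult_choose_three_diff n by simp
  moreover have "0 < (n - 4) choose 2" using n by simp
  ultimately show ?thesis by (simp add: c_def ac_simps)
qed

lemma tight_kneser_cut_nbhd_eq:
  assumes n: "9 \<le> n" and cut: "vertex_cut (kneser_vertices n 3) kneser_adj S"
    and tight: "3 * card S = (n - 3) * num_components (kneser_vertices n 3) kneser_adj S"
    and K: "K \<in> components_del (kneser_vertices n 3) kneser_adj S"
  shows "card (neighbours_in kneser_adj S K) = (n - 3) choose 3"
proof -
  let ?C = "components_del (kneser_vertices n 3) kneser_adj S"
  have S: "S \<subseteq> kneser_vertices n 3" using cut by (simp add: vertex_cut_def)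
  have fin: "finite ?C" using finite_kneser_vertices by (simp add: components_del_def)
  have "3 * (card S * ((n - 4) choose 2)) = ((n - 3) * card ?C) * ((n - 4) choose 2)"
    using tight by (simp add: num_components_def)
  also have "\<dots> = card ?C * (3 * ((n - 3) choose 3))"
    using three_mult_choose_three_diff n by simp
  finally have "card S * ((n - 4) choose 2) = card ?C * ((n - 3) choose 3)" by simp
  then have "(\<Sum>K\<in>?C. card (neighbours_in kneser_adj S K)) \<le> (\<Sum>K\<in>?C. (n - 3) choose 3)"
    using sum_card_kneser_component_nbhd_le[OF n S] by simp
  then have "(\<Sum>K\<in>?C. card (neighbours_in kneser_adj S K)) = (\<Sum>K\<in>?C. (n - 3) choose 3)"
    using sum_mono[of ?C "\<lambda>_. (n - 3) choose 3"] card_kneser_component_nbhd_ge[OF n cut]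
    by (meson order_antisym)
  from sum_mono_inv[OF this[symmetric] _ K fin] show ?thesis
    using card_kneser_component_nbhd_ge[OF n cut] by fastforce
qed

lemma tight_kneser_cut_components_singleton:
  assumes n: "9 \<le> n" and cut: "vertex_cut (kneser_vertices n 3) kneser_adj S"
    and tight: "3 * card S = (n - 3) * num_components (kneser_vertices n 3) kneser_adj S"
    and K: "K \<in> components_del (kneser_vertices n 3) kneser_adj S" and ab: "a \<in> K" "b \<in> K"
  shows "a = b"
proof (rule ccontr)
  assume "a \<noteq> b"
  let ?V = "kneser_vertices n 3" and ?N = "neighbours_in kneser_adj S K"
  have S: "S \<subseteq> ?V" using cut by (simp add: vertex_cut_def)
  have "\<not> 2 \<le> card (?V - K - ?N)"
    using card_kneser_component_nbhd_gt[OF n S K ab \<open>a \<noteq> b\<close>]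
      tight_kneser_cut_nbhd_eq[OF n cut tight K] by linarith
  then have "card (components_del ?V kneser_adj S) \<le> 2"
    using kneser.two_le_card_outside_component[OF finite_kneser_vertices K] by linarith
  then have "3 * card S \<le> 2 * (n - 3)" using tight by (simp add: num_components_def)
  moreover have "card ?N \<le> card S"
    using S finite_kneser_vertices[of n 3] by (intro card_mono) (auto simp: neighbours_in_def intro: finite_subset)
  then have "(n - 3) choose 3 \<le> card S" using tight_kneser_cut_nbhd_eq[OF n cut tight K] by simp
  moreover have "3 * ((n - 3) choose 3) = (n - 3) * ((n - 4) choose 2)"
    using three_mult_choose_three_diff n by simp
  ultimately have "(n - 3) * ((n - 4) choose 2) \<le> (n - 3) * 2" by linarith
  then have "(n - 4) choose 2 \<le> 2" using n by simp
  moreover have "(5::nat) choose 2 \<le> (n - 4) choose 2" using n by (intro binomial_right_mono) simp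
  ultimately show False by (simp add: choose_two)
qed

lemma tight_kneser_cut_complement_maximum_independent:
  assumes n: "9 \<le> n" and cut: "vertex_cut (kneser_vertices n 3) kneser_adj S"
    and tight: "3 * card S = (n - 3) * num_components (kneser_vertices n 3) kneser_adj S"
  shows "maximum_independent_set (kneser_vertices n 3) kneser_adj (kneser_vertices n 3 - S)"
proof -
  let ?V = "kneser_vertices n 3"
  define W where "W = ?V - S"
  have S: "S \<subseteq> ?V" using cut by (simp add: vertex_cut_def)
  have indep: "\<not> kneser_adj a b" if ab: "a \<in> W" "b \<in> W" for a b
  proof
    assume adj: "kneser_adj a b"
    then obtain K where "K \<in> components_del ?V kneser_adj S" "a \<in> K" "b \<in> K"
      using kneser.adjacent_in_same_component ab unfolding W_def by blast
    then have "a = b" using tight_kneser_cut_components_singleton[OF n cut tight] by blast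
    then show False using adj ab by (auto simp: W_def kneser_adj_def mem_kneser_vertices)
  qed
  have "components_del ?V kneser_adj S = (\<lambda>x. {x}) ` W"
    unfolding W_def using indep by (intro kneser.components_del_independent) (auto simp: W_def)
  then have c: "num_components ?V kneser_adj S = card W"
    by (simp add: num_components_def card_image)
  have "card S \<le> card ?V" using S finite_kneser_vertices by (rule card_mono[rotated])
  then have "card S + card W = n choose 3"
    using S finite_kneser_vertices[of n 3] card_kneser_vertices[of n 3]
    by (simp add: W_def card_Diff_subset finite_subset)
  have "n * card W = ((n - 3) + 3) * card W" using n by simp
  also have "\<dots> = 3 * card S + 3 * card W" using tight c by (simp add: add_mult_distrib)
  also have "\<dots> = 3 * (n choose 3)" using \<open>card S + card W = n choose 3\<close> by simp
  also have "\<dots> = n * ((n - 1) choose 2)" using three_mult_choose_three[of n] n by simp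
  finally have card_W: "card W = (n - 1) choose 2" using n by simp
  show ?thesis
    unfolding maximum_independent_set_def W_def[symmetric]
  proof (intro conjI allI impI)
    show "independent_set ?V kneser_adj W" using indep by (auto simp: independent_set_def W_def)
    show "card J \<le> card W" if "independent_set ?V kneser_adj J" for J
      using kneser_independent_card_le[of 3 n J] that n card_W by simp
  qed
qed

lemma kneser_star_complement_tight_cut:
  assumes n: "9 \<le> n"
  defines "S \<equiv> kneser_vertices n 3 - {A \<in> kneser_vertices n 3. 1 \<in> A}"
  shows "vertex_cut (kneser_vertices n 3) kneser_adj S"
    and "3 * card S = (n - 3) * num_components (kneser_vertices n 3) kneser_adj S"
proof -
  let ?V = "kneser_vertices n 3" and ?I = "{A \<in> kneser_vertices n 3. 1 \<in> A}"
  have "?V - S = ?I" by (auto simp: S_def)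
  moreover have "components_del ?V kneser_adj S = (\<lambda>x. {x}) ` (?V - S)"
    by (rule kneser.components_del_independent) (auto simp: S_def kneser_adj_def)
  ultimately have c: "num_components ?V kneser_adj S = (n - 1) choose 2"
    using card_kneser_star[of 1 n 3] n by (simp add: num_components_def card_image)
  have "(5::nat) choose 2 \<le> (n - 1) choose 2" using n by (intro binomial_right_mono) simp
  then show "vertex_cut ?V kneser_adj S"
    using c by (auto simp: vertex_cut_def S_def choose_two)
  have "card S = (n choose 3) - ((n - 1) choose 2)"
    using card_kneser_star[of 1 n 3] n card_kneser_vertices[of n 3] finite_kneser_vertices[of n 3]
    by (simp add: S_def card_Diff_subset)
  then have "3 * card S = n * ((n - 1) choose 2) - 3 * ((n - 1) choose 2)"
    using three_mult_choose_three[of n] n by (simp add: diff_mult_distrib2)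
  then show "3 * card S = (n - 3) * num_components ?V kneser_adj S"
    using c by (simp add: diff_mult_distrib)
qed

lemma ratio_vs_third_minus_one:
  fixes s c n :: nat
  assumes "0 < c" "3 \<le> n"
  shows "real n / 3 - 1 \<le> real s / real c \<longleftrightarrow> (n - 3) * c \<le> 3 * s"
    and "real s / real c = real n / 3 - 1 \<longleftrightarrow> 3 * s = (n - 3) * c"
proof -
  have "real n / 3 - 1 = real (n - 3) / 3" using assms by (simp add: of_nat_diff field_simps)
  moreover have "real (n - 3) / 3 \<le> real s / real c \<longleftrightarrow> real ((n - 3) * c) \<le> real (3 * s)"
    and "real s / real c = real (n - 3) / 3 \<longleftrightarrow> real (3 * s) = real ((n - 3) * c)"
    using assms by (simp_all add: field_simps)
  ultimately show "real n / 3 - 1 \<le> real s / real c \<longleftrightarrow> (n - 3) * c \<le> 3 * s"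
    and "real s / real c = real n / 3 - 1 \<longleftrightarrow> 3 * s = (n - 3) * c"
    by (simp_all only: of_nat_le_iff of_nat_eq_iff)
qed

lemma kneser_cut_ratio:
  assumes n: "9 \<le> n" and cut: "vertex_cut (kneser_vertices n 3) kneser_adj S"
  shows "real n / 3 - 1 \<le> real (card S) / real (num_components (kneser_vertices n 3) kneser_adj S)"
    and "real (card S) / real (num_components (kneser_vertices n 3) kneser_adj S) = real n / 3 - 1
      \<longleftrightarrow> 3 * card S = (n - 3) * num_components (kneser_vertices n 3) kneser_adj S"
  using ratio_vs_third_minus_one[of "num_components (kneser_vertices n 3) kneser_adj S" n "card S"]
    kneser_cut_card_ge[OF n cut] cut n by (auto simp: vertex_cut_def)

theorem theorem4p1:
  fixes n :: nat
  assumes "n \<ge> 9"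
  shows "toughness (kneser_vertices n 3) kneser_adj = real n / 3 - 1 \<and>
    (\<forall>S. vertex_cut (kneser_vertices n 3) kneser_adj S \<and>
         real (card S) / real (num_components (kneser_vertices n 3) kneser_adj S) = real n / 3 - 1
       \<longrightarrow> (\<exists>I. maximum_independent_set (kneser_vertices n 3) kneser_adj I \<and>
                S = kneser_vertices n 3 - I))"
proof -
  let ?V = "kneser_vertices n 3"
  have n: "9 \<le> n" using assms by simp
  have "toughness ?V kneser_adj = real n / 3 - 1"
    unfolding toughness_def
  proof (rule cInf_eq_minimum)
    let ?S0 = "?V - {A \<in> ?V. 1 \<in> A}"
    show "real n / 3 - 1 \<in> {real (card S) / real (num_components ?V kneser_adj S) | S.
        vertex_cut ?V kneser_adj S}"
      using kneser_star_complement_tight_cut[OF n] kneser_cut_ratio(2)[OF n, of ?S0] by force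
  qed (use kneser_cut_ratio(1)[OF n] in blast)
  moreover have "maximum_independent_set ?V kneser_adj (?V - S) \<and> S = ?V - (?V - S)"
    if "vertex_cut ?V kneser_adj S"
      "real (card S) / real (num_components ?V kneser_adj S) = real n / 3 - 1" for S
    using tight_kneser_cut_complement_maximum_independent[OF n that(1)]
      kneser_cut_ratio(2)[OF n that(1)] that by (auto simp: vertex_cut_def)
  ultimately show ?thesis by blast
qed

end
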